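(* A sequence $\mathfrak{f}\in\mathfrak{M}_4$ belongs to $\mathfrak{S}_4$ if and only if $$\mathfrak{f}=\alpha_{11}\mathfrak{p}_{(1^4)}+2\alpha_{12}\mathfrak{p}_{(2,1^2)}+\alpha_{22}\mathfrak{p}_{(2^2)}+\beta_{11}\left(\mathfrak{p}_{(2,1^2)}-\mathfrak{p}_{(1^4)}\right)+2\beta_{12}\left(\mathfrak{p}_{(3,1)}-\mathfrak{p}_{(2,1^2)}\right)+\beta_{22}\left(\mathfrak{p}_{(4)}-\mathfrak{p}_{(2^2)}\right)$$ for some real numbers such that $\begin{pmatrix}\alpha_{11}&\alpha_{12}\\ \alpha_{12}&\alpha_{22}\end{pmatrix}$ and $\begin{pmatrix}\beta_{11}&\beta_{12}\\ \beta_{12}&\beta_{22}\end{pmatrix}$ are positive semidefinite.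
   Context: $p^{(n)}_i=\frac1n(x_1^i+\dots+x_n^i)$, $p^{(n)}_\lambda=\prod_i p^{(n)}_{\lambda_i}$ for a partition $\lambda$ of $4$. For $\lambda\vdash 4$, $\mathfrak{p}_\lambda$ denotes the sequence $(p^{(4)}_\lambda,p^{(5)}_\lambda,\dots)$, and $\mathfrak{M}_4$ is the 5-dimensional real vector space of sequences $\mathfrak{f}=\sum_{\lambda\vdash4}c_\lambda\mathfrak{p}_\lambda$, i.e. $\mathfrak{f}=(f^{(n)})_{n\ge4}$ with $f^{(n)}=\sum_\lambda c_\lambda p^{(n)}_\lambda$. $\mathfrak{S}_4$ is the set of $\mathfrak{f}\in\mathfrak{M}_4$ such that $f^{(n)}$ is a sum of squares of real forms for every $n\ge 4$. *)

theory Defs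
  imports Complex_Main
begin

text \<open>Points of R^n are represented as functions x :: nat => real; only the
coordinates x 0, ..., x (n-1) (i.e. x_1, ..., x_n) are used.\<close>

definition monom :: "nat \<Rightarrow> (nat \<Rightarrow> nat) \<Rightarrow> (nat \<Rightarrow> real) \<Rightarrow> real" where
  "monom n a x = (\<Prod>i<n. x i ^ a i)"

definition is_form :: "nat \<Rightarrow> nat \<Rightarrow> ((nat \<Rightarrow> real) \<Rightarrow> real) \<Rightarrow> bool" where
  "is_form n d g \<longleftrightarrow>
     (\<exists>S :: (nat \<Rightarrow> nat) set. \<exists>c :: (nat \<Rightarrow> nat) \<Rightarrow> real.
        finite S \<and> (\<forall>a\<in>S. (\<forall>i. n \<le> i \<longrightarrow> a i = 0) \<and> (\<Sum>i<n. a i) = d) \<and>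
        (\<forall>x. g x = (\<Sum>a\<in>S. c a * monom n a x)))"

definition is_sos :: "nat \<Rightarrow> ((nat \<Rightarrow> real) \<Rightarrow> real) \<Rightarrow> bool" where
  "is_sos n f \<longleftrightarrow>
     (\<exists>gs :: ((nat \<Rightarrow> real) \<Rightarrow> real) list.
        (\<forall>g\<in>set gs. \<exists>d. is_form n d g) \<and> (\<forall>x. f x = (\<Sum>g\<leftarrow>gs. (g x)^2)))"

definition psum :: "nat \<Rightarrow> nat \<Rightarrow> (nat \<Rightarrow> real) \<Rightarrow> real" where
  "psum n i x = (1 / real n) * (\<Sum>j<n. x j ^ i)"

definition p_4 :: "nat \<Rightarrow> (nat \<Rightarrow> real) \<Rightarrow> real" where
  "p_4 n x = psum n 4 x"
definition p_31 :: "nat \<Rightarrow> (nat \<Rightarrow> real) \<Rightarrow> real" where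
  "p_31 n x = psum n 3 x * psum n 1 x"
definition p_22 :: "nat \<Rightarrow> (nat \<Rightarrow> real) \<Rightarrow> real" where
  "p_22 n x = psum n 2 x * psum n 2 x"
definition p_211 :: "nat \<Rightarrow> (nat \<Rightarrow> real) \<Rightarrow> real" where
  "p_211 n x = psum n 2 x * psum n 1 x * psum n 1 x"
definition p_1111 :: "nat \<Rightarrow> (nat \<Rightarrow> real) \<Rightarrow> real" where
  "p_1111 n x = psum n 1 x * psum n 1 x * psum n 1 x * psum n 1 x"

definition mseq :: "real \<Rightarrow> real \<Rightarrow> real \<Rightarrow> real \<Rightarrow> real \<Rightarrow> nat \<Rightarrow> (nat \<Rightarrow> real) \<Rightarrow> real" where
  "mseq c4 c31 c22 c211 c1111 n x =
     c4 * p_4 n x + c31 * p_31 n x + c22 * p_22 n x + c211 * p_211 n x + c1111 * p_1111 n x"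

definition in_S4 :: "(nat \<Rightarrow> (nat \<Rightarrow> real) \<Rightarrow> real) \<Rightarrow> bool" where
  "in_S4 f \<longleftrightarrow> (\<forall>n\<ge>4. is_sos n (f n))"

text \<open>Positive semidefiniteness of the symmetric matrix [[a, b], [b, c]].\<close>
definition psd2 :: "real \<Rightarrow> real \<Rightarrow> real \<Rightarrow> bool" where
  "psd2 a b c \<longleftrightarrow> (\<forall>u v. 0 \<le> a * u^2 + 2 * b * u * v + c * v^2)"

end

theory Submission
  imports Defs
begin

text \<open>
  Sufficiency: a positive semidefinite binary quadratic form evaluated at two quadratic forms is
  a sum of two squares of quadratic forms. The alpha-part is such an expression in p1^2 and p2.
  By the covariance identity (1/n) sum_j (x_j^a - p_a)(x_j^b - p_b) = p_(a+b) - p_a p_b, the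
  beta-part is the average over j of such an expression in p1 (x_j - p1) and x_j^2 - p2.

  Necessity: at a point with k coordinates equal to a and n - k equal to b, f^(n) is f evaluated
  at the moments of the distribution taking the value a with probability k/n and b otherwise, so
  by density f is nonnegative at the moments of every two-point distribution. In terms of the
  mean m, the variance V >= 0 and a free skewness parameter y this reads
  A m^4 + B m^2 V + C V^2 + V (c31 m y + c4 y^2) >= 0. Minimising over y leaves a binary quadratic
  in (m^2, V) that is nonnegative on the positive quadrant; such a quadratic stays positive
  semidefinite once the positive part of its middle coefficient is dropped, which gives alpha,
  and the dropped part together with the y-part gives beta.
\<close>

section \<open>Real forms\<close>

lemma is_form_sum_monoms:
  assumes "finite I"
    and deg: "\<And>q i. q \<in> I \<Longrightarrow> n \<le> i \<Longrightarrow> a q i = 0" "\<And>q. q \<in> I \<Longrightarrow> (\<Sum>i<n. a q i) = d"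
    and g: "\<And>x. g x = (\<Sum>q\<in>I. w q * monom n (a q) x)"
  shows "is_form n d g"
  unfolding is_form_def
proof (intro exI conjI allI)
  define c where "c b = (\<Sum>q | q \<in> I \<and> a q = b. w q)" for b
  show "finite (a ` I)" using \<open>finite I\<close> by simp
  show "\<forall>b\<in>a ` I. (\<forall>i. n \<le> i \<longrightarrow> b i = 0) \<and> (\<Sum>i<n. b i) = d" using deg by auto
  fix x
  have "(\<Sum>b\<in>a ` I. c b * monom n b x) = (\<Sum>b\<in>a ` I. \<Sum>q | q \<in> I \<and> a q = b. w q * monom n (a q) x)"
    unfolding c_def sum_distrib_right by (intro sum.cong) auto
  also have "\<dots> = g x"
    unfolding g by (rule sum.group) (use \<open>finite I\<close> in auto)
  finally show "g x = (\<Sum>b\<in>a ` I. c b * monom n b x)" ..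
qed

lemma is_form_zero: "is_form n d (\<lambda>x. 0)"
  by (rule is_form_sum_monoms[where I = "{}"]) auto

lemma is_form_var_power:
  assumes "j < n"
  shows "is_form n k (\<lambda>x. x j ^ k)"
proof (rule is_form_sum_monoms[where I = "{j}" and a = "\<lambda>j i. if i = j then k else 0" and w = "\<lambda>_. 1"])
  fix x
  have "monom n (\<lambda>i. if i = j then k else 0) x = (\<Prod>i<n. if i = j then x j ^ k else 1)"
    unfolding monom_def by (intro prod.cong) auto
  then show "x j ^ k = (\<Sum>q\<in>{j}. 1 * monom n (\<lambda>i. if i = q then k else 0) x)"
    using assms by simp
qed (use assms in auto)

lemma is_form_scale:
  assumes "is_form n d g"
  shows "is_form n d (\<lambda>x. k * g x)"
proof -
  obtain S c where S: "finite S" "\<And>a i. a \<in> S \<Longrightarrow> n \<le> i \<Longrightarrow> a i = 0"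
    "\<And>a. a \<in> S \<Longrightarrow> (\<Sum>i<n. a i) = d" and g: "\<And>x. g x = (\<Sum>a\<in>S. c a * monom n a x)"
    using assms unfolding is_form_def by auto
  show ?thesis
    by (rule is_form_sum_monoms[where I = S and a = id and w = "\<lambda>a. k * c a"])
       (simp_all add: S g sum_distrib_left mult.assoc)
qed

lemma is_form_add:
  assumes "is_form n d g" "is_form n d h"
  shows "is_form n d (\<lambda>x. g x + h x)"
proof -
  obtain S c where S: "finite S" "\<And>a i. a \<in> S \<Longrightarrow> n \<le> i \<Longrightarrow> a i = 0"
    "\<And>a. a \<in> S \<Longrightarrow> (\<Sum>i<n. a i) = d" and g: "\<And>x. g x = (\<Sum>a\<in>S. c a * monom n a x)"
    using assms(1) unfolding is_form_def by auto
  obtain T e where T: "finite T" "\<And>a i. a \<in> T \<Longrightarrow> n \<le> i \<Longrightarrow> a i = 0"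
    "\<And>a. a \<in> T \<Longrightarrow> (\<Sum>i<n. a i) = d" and h: "\<And>x. h x = (\<Sum>a\<in>T. e a * monom n a x)"
    using assms(2) unfolding is_form_def by auto
  show ?thesis
    by (rule is_form_sum_monoms[where I = "S <+> T" and a = "case_sum id id" and w = "case_sum c e"])
       (use S T in \<open>auto simp: g h sum.Plus comp_def\<close>)
qed

lemma is_form_diff:
  assumes "is_form n d g" "is_form n d h"
  shows "is_form n d (\<lambda>x. g x - h x)"
  using is_form_add[OF assms(1) is_form_scale[OF assms(2), of "-1"]] by simp

lemma monom_add: "monom n (\<lambda>i. a i + b i) x = monom n a x * monom n b x"
  unfolding monom_def by (simp add: power_add prod.distrib)

lemma is_form_mult:
  assumes "is_form n d g" "is_form n e h"
  shows "is_form n (d + e) (\<lambda>x. g x * h x)"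
proof -
  obtain S c where S: "finite S" "\<And>a i. a \<in> S \<Longrightarrow> n \<le> i \<Longrightarrow> a i = 0"
    "\<And>a. a \<in> S \<Longrightarrow> (\<Sum>i<n. a i) = d" and g: "\<And>x. g x = (\<Sum>a\<in>S. c a * monom n a x)"
    using assms(1) unfolding is_form_def by auto
  obtain T c' where T: "finite T" "\<And>a i. a \<in> T \<Longrightarrow> n \<le> i \<Longrightarrow> a i = 0"
    "\<And>a. a \<in> T \<Longrightarrow> (\<Sum>i<n. a i) = e" and h: "\<And>x. h x = (\<Sum>a\<in>T. c' a * monom n a x)"
    using assms(2) unfolding is_form_def by auto
  show ?thesis
  proof (rule is_form_sum_monoms[where I = "S \<times> T" and a = "\<lambda>(a, b) i. a i + b i"
        and w = "\<lambda>(a, b). c a * c' b"])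
    fix x
    show "g x * h x = (\<Sum>q\<in>S \<times> T. (case q of (a, b) \<Rightarrow> c a * c' b) * monom n ((\<lambda>(a, b) i. a i + b i) q) x)"
      unfolding g h sum_product sum.cartesian_product
      by (intro sum.cong) (auto simp: monom_add)
  qed (use S T in \<open>auto simp: sum.distrib\<close>)
qed

lemma is_form_sum:
  assumes "finite J" "\<And>j. j \<in> J \<Longrightarrow> is_form n d (f j)"
  shows "is_form n d (\<lambda>x. \<Sum>j\<in>J. f j x)"
  using assms by (induction J rule: finite_induct) (auto intro: is_form_zero is_form_add)

lemma is_form_psum: "is_form n i (psum n i)"
  unfolding psum_def[abs_def]
  by (intro is_form_scale is_form_sum is_form_var_power) auto

section \<open>Sums of squares from positive semidefinite binary forms\<close>

lemma is_sos_zero: "is_sos n (\<lambda>x. 0)"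
  unfolding is_sos_def by (intro exI[of _ "[]"]) simp

lemma is_sos_add:
  assumes "is_sos n f" "is_sos n g"
  shows "is_sos n (\<lambda>x. f x + g x)"
proof -
  obtain fs gs where fs: "\<forall>h\<in>set fs. \<exists>d. is_form n d h" "\<forall>x. f x = (\<Sum>h\<leftarrow>fs. (h x)^2)"
    and gs: "\<forall>h\<in>set gs. \<exists>d. is_form n d h" "\<forall>x. g x = (\<Sum>h\<leftarrow>gs. (h x)^2)"
    using assms unfolding is_sos_def by blast
  show ?thesis
    unfolding is_sos_def by (intro exI[of _ "fs @ gs"]) (use fs gs in auto)
qed

lemma is_sos_sum:
  assumes "finite J" "\<And>j. j \<in> J \<Longrightarrow> is_sos n (f j)"
  shows "is_sos n (\<lambda>x. \<Sum>j\<in>J. f j x)"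
  using assms by (induction J rule: finite_induct) (auto intro: is_sos_zero is_sos_add)

lemma psd2_diag_nonneg:
  assumes "psd2 a b c"
  shows "0 \<le> a" "0 \<le> c"
  using assms[unfolded psd2_def, rule_format, of 1 0] assms[unfolded psd2_def, rule_format, of 0 1]
  by simp_all

lemma psd2_det_nonneg:
  assumes "psd2 a b c"
  shows "b^2 \<le> a * c"
proof (cases "a = 0")
  case True
  have "b = 0"
  proof (rule ccontr)
    assume "b \<noteq> 0"
    have "0 \<le> 2 * b * (-(c + 1) / (2 * b)) * 1 + c * 1^2"
      using assms[unfolded psd2_def, rule_format, of "-(c + 1) / (2 * b)" 1] True by simp
    then show False using \<open>b \<noteq> 0\<close> by simp
  qed
  then show ?thesis using True by simp
next
  case False
  have "0 \<le> a * (a * c - b^2)"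
    using assms[unfolded psd2_def, rule_format, of b "-a"] by (simp add: algebra_simps power2_eq_square)
  then show ?thesis using False psd2_diag_nonneg(1)[OF assms] by (simp add: zero_le_mult_iff)
qed

lemma psd2_sum_of_two_squares:
  assumes "psd2 a b c"
  obtains r s t where "\<And>u v. a * u^2 + 2 * b * u * v + c * v^2 = (r * u + s * v)^2 + (t * v)^2"
proof (cases "a = 0")
  case True
  then have "b = 0" using psd2_det_nonneg[OF assms] by simp
  then show ?thesis
    using that[of 0 0 "sqrt c"] True psd2_diag_nonneg(2)[OF assms] by (simp add: power_mult_distrib)
next
  case False
  then have "0 < a" using psd2_diag_nonneg(1)[OF assms] by simp
  moreover have "0 \<le> c - b^2 / a" using psd2_det_nonneg[OF assms] \<open>0 < a\<close> by (simp add: field_simps)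
  ultimately show ?thesis
    by (intro that[of "sqrt a" "b / sqrt a" "sqrt (c - b^2 / a)"])
       (simp add: power_mult_distrib power2_sum power_divide field_simps power2_eq_square)
qed

lemma is_sos_psd2:
  assumes "psd2 a b c" "is_form n d U" "is_form n d W"
  shows "is_sos n (\<lambda>x. a * U x^2 + 2 * b * U x * W x + c * W x^2)"
proof -
  obtain r s t where rst: "\<And>u v. a * u^2 + 2 * b * u * v + c * v^2 = (r * u + s * v)^2 + (t * v)^2"
    using psd2_sum_of_two_squares[OF assms(1)] by blast
  have "is_form n d (\<lambda>x. r * U x + s * W x)" "is_form n d (\<lambda>x. t * W x)"
    by (auto intro!: is_form_add is_form_scale assms(2,3))
  then show ?thesis
    unfolding is_sos_def rst by (intro exI[of _ "[\<lambda>x. r * U x + s * W x, \<lambda>x. t * W x]"]) auto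
qed

lemma psd2_scale:
  assumes "0 \<le> k" "psd2 a b c"
  shows "psd2 (k * a) (k * b) (k * c)"
  unfolding psd2_def
proof (intro allI)
  fix u v :: real
  have "k * a * u^2 + 2 * (k * b) * u * v + k * c * v^2 = k * (a * u^2 + 2 * b * u * v + c * v^2)"
    by (simp add: algebra_simps)
  then show "0 \<le> k * a * u^2 + 2 * (k * b) * u * v + k * c * v^2"
    using assms unfolding psd2_def by simp
qed

lemma psum_centered_product:
  assumes "0 < n"
  shows "(\<Sum>j<n. (x j ^ a - psum n a x) * (x j ^ b - psum n b x)) / real n
    = psum n (a + b) x - psum n a x * psum n b x"
proof -
  have sums: "(\<Sum>j<n. x j ^ i) = real n * psum n i x" for i
    unfolding psum_def using assms by simp
  have "(\<Sum>j<n. (x j ^ a - psum n a x) * (x j ^ b - psum n b x))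
      = (\<Sum>j<n. x j ^ (a + b)) - psum n b x * (\<Sum>j<n. x j ^ a) - psum n a x * (\<Sum>j<n. x j ^ b)
        + real n * (psum n a x * psum n b x)"
    by (simp add: algebra_simps power_add sum.distrib sum_subtractf sum_distrib_left)
  then show ?thesis
    unfolding sums using assms by (simp add: field_simps)
qed

lemma beta_combination_eq_average:
  assumes "0 < n"
  shows "b11 * (p_211 n x - p_1111 n x) + 2 * b12 * (p_31 n x - p_211 n x) + b22 * (p_4 n x - p_22 n x)
    = (\<Sum>j<n. b11 / n * (psum n 1 x * (x j - psum n 1 x))^2
        + 2 * (b12 / n) * (psum n 1 x * (x j - psum n 1 x)) * (x j ^ 2 - psum n 2 x)
        + b22 / n * (x j ^ 2 - psum n 2 x)^2)"
proof -
  define cov where "cov a b = (\<Sum>j<n. (x j ^ a - psum n a x) * (x j ^ b - psum n b x)) / real n" for a b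
  define c where "c a b j = (x j ^ a - psum n a x) * (x j ^ b - psum n b x) / real n" for a b j
  have "(\<Sum>j<n. b11 / n * (psum n 1 x * (x j - psum n 1 x))^2
        + 2 * (b12 / n) * (psum n 1 x * (x j - psum n 1 x)) * (x j ^ 2 - psum n 2 x)
        + b22 / n * (x j ^ 2 - psum n 2 x)^2)
      = (\<Sum>j<n. b11 * psum n 1 x ^ 2 * c 1 1 j + 2 * b12 * psum n 1 x * c 1 2 j + b22 * c 2 2 j)"
    unfolding c_def divide_inverse by (intro sum.cong refl) algebra
  also have "\<dots> = b11 * psum n 1 x ^ 2 * cov 1 1 + 2 * b12 * psum n 1 x * cov 1 2 + b22 * cov 2 2"
    by (simp add: cov_def c_def sum.distrib sum_distrib_left sum_divide_distrib)
  finally have average: "(\<Sum>j<n. b11 / n * (psum n 1 x * (x j - psum n 1 x))^2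
        + 2 * (b12 / n) * (psum n 1 x * (x j - psum n 1 x)) * (x j ^ 2 - psum n 2 x)
        + b22 / n * (x j ^ 2 - psum n 2 x)^2)
      = b11 * psum n 1 x ^ 2 * cov 1 1 + 2 * b12 * psum n 1 x * cov 1 2 + b22 * cov 2 2" .
  have cov_eq: "cov 1 1 = psum n 2 x - psum n 1 x * psum n 1 x"
    "cov 1 2 = psum n 3 x - psum n 1 x * psum n 2 x"
    "cov 2 2 = psum n 4 x - psum n 2 x * psum n 2 x"
    using psum_centered_product[OF assms, of x 1 1] psum_centered_product[OF assms, of x 1 2]
      psum_centered_product[OF assms, of x 2 2]
    by (simp_all add: cov_def numeral_eq_Suc)
  show ?thesis
    unfolding average cov_eq
    by (simp add: p_1111_def p_211_def p_22_def p_31_def p_4_def power2_eq_square algebra_simps)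
qed

lemma is_sos_psd2_combination:
  assumes A: "psd2 a11 a12 a22" and B: "psd2 b11 b12 b22" and "0 < n"
    and f: "\<And>x. f x = a11 * p_1111 n x + 2 * a12 * p_211 n x + a22 * p_22 n x
      + b11 * (p_211 n x - p_1111 n x) + 2 * b12 * (p_31 n x - p_211 n x) + b22 * (p_4 n x - p_22 n x)"
  shows "is_sos n f"
proof -
  define Q where "Q x = psum n 1 x * psum n 1 x" for x
  define U where "U j x = psum n 1 x * (x j - psum n 1 x)" for j x
  define W where "W j x = x j ^ 2 - psum n 2 x" for j x
  have alpha: "a11 * p_1111 n x + 2 * a12 * p_211 n x + a22 * p_22 n x
      = a11 * Q x^2 + 2 * a12 * Q x * psum n 2 x + a22 * psum n 2 x^2" for x
    by (simp add: Q_def p_1111_def p_211_def p_22_def power2_eq_square algebra_simps)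
  have decomposition: "f = (\<lambda>x. (a11 * Q x^2 + 2 * a12 * Q x * psum n 2 x + a22 * psum n 2 x^2)
      + (\<Sum>j<n. b11 / n * U j x^2 + 2 * (b12 / n) * U j x * W j x + b22 / n * W j x^2))"
  proof
    fix x
    show "f x = (a11 * Q x^2 + 2 * a12 * Q x * psum n 2 x + a22 * psum n 2 x^2)
      + (\<Sum>j<n. b11 / n * U j x^2 + 2 * (b12 / n) * U j x * W j x + b22 / n * W j x^2)"
      unfolding f alpha U_def W_def beta_combination_eq_average[OF \<open>0 < n\<close>, symmetric]
      by (simp only: add.assoc)
  qed
  have Q: "is_form n 2 Q"
    using is_form_mult[OF is_form_psum is_form_psum, of n 1 1] unfolding one_add_one Q_def[abs_def] .
  have UW: "is_form n 2 (U j)" "is_form n 2 (W j)" if "j < n" for j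
  proof -
    have "is_form n 1 (\<lambda>x. x j - psum n 1 x)"
      using is_form_diff[OF is_form_var_power[OF that, of 1] is_form_psum] by simp
    from is_form_mult[OF is_form_psum[of n 1] this] show "is_form n 2 (U j)"
      unfolding one_add_one U_def[abs_def] .
    show "is_form n 2 (W j)"
      unfolding W_def[abs_def] by (intro is_form_diff is_form_var_power is_form_psum that)
  qed
  have "psd2 (b11 / n) (b12 / n) (b22 / n)"
    using psd2_scale[OF _ B, of "1 / n"] by simp
  then have "is_sos n (\<lambda>x. \<Sum>j<n. b11 / n * U j x^2 + 2 * (b12 / n) * U j x * W j x + b22 / n * W j x^2)"
    by (intro is_sos_sum is_sos_psd2) (auto intro: UW)
  with is_sos_psd2[OF A Q is_form_psum] show ?thesis
    unfolding decomposition by (rule is_sos_add)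
qed

section \<open>Positive semidefinite binary forms from nonnegativity\<close>

lemma bounded_below_quadratic_coeffs:
  fixes L p q :: real
  assumes bdd: "\<And>y. L \<le> q * y + p * y^2"
  shows "0 \<le> p" and "p = 0 \<Longrightarrow> q = 0"
proof -
  show "0 \<le> p"
  proof (rule ccontr)
    assume "\<not> 0 \<le> p"
    define y where "y = max 1 ((\<bar>q\<bar> + \<bar>L\<bar> + 1) / (- p))"
    have "1 \<le> y" unfolding y_def by simp
    have "\<bar>q\<bar> + \<bar>L\<bar> + 1 = - p * ((\<bar>q\<bar> + \<bar>L\<bar> + 1) / (- p))"
      using \<open>\<not> 0 \<le> p\<close> by simp
    also have "\<dots> \<le> - p * y"
      using \<open>\<not> 0 \<le> p\<close> unfolding y_def by (intro mult_left_mono) auto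
    finally have "\<bar>q\<bar> + \<bar>L\<bar> + 1 \<le> - p * y" .
    then have "y * (q + p * y) \<le> y * (- \<bar>L\<bar> - 1)"
      using \<open>1 \<le> y\<close> by (intro mult_left_mono) auto
    also have "\<dots> \<le> - \<bar>L\<bar> - 1"
      using mult_left_mono[OF \<open>1 \<le> y\<close>, of "\<bar>L\<bar> + 1"] by (simp add: algebra_simps)
    finally show False
      using bdd[of y] by (simp add: algebra_simps power2_eq_square)
  qed
  show "q = 0" if "p = 0"
  proof (rule ccontr)
    assume "q \<noteq> 0"
    then show False
      using bdd[of "(L - 1) / q"] that by simp
  qed
qed

text \<open>For p = 0 the next two lemmas rely on division by zero yielding zero.\<close>

lemma psd2_vertex:
  assumes "0 \<le> p" "p = 0 \<Longrightarrow> q = 0"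
  shows "psd2 (q^2 / (4 * p)) (q / 2) p"
  unfolding psd2_def
proof (intro allI)
  fix u v :: real
  show "0 \<le> q^2 / (4 * p) * u^2 + 2 * (q / 2) * u * v + p * v^2"
  proof (cases "p = 0")
    case False
    then have "q^2 / (4 * p) * u^2 + 2 * (q / 2) * u * v + p * v^2 = (q * u + 2 * p * v)^2 / (4 * p)"
      by (simp add: field_simps power2_eq_square)
    then show ?thesis using assms(1) by simp
  qed (use assms in simp)
qed

lemma quadratic_at_vertex:
  fixes p q :: real
  assumes "p = 0 \<Longrightarrow> q = 0"
  shows "q * (- q / (2 * p)) + p * (- q / (2 * p))^2 = - (q^2 / (4 * p))"
  using assms by (cases "p = 0") (simp_all add: field_simps power2_eq_square)

lemma psd2_of_copositive:
  assumes copos: "\<And>u v. 0 \<le> u \<Longrightarrow> 0 \<le> v \<Longrightarrow> 0 \<le> a * u^2 + 2 * b * u * v + c * v^2"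
  shows "psd2 a (min b 0) c"
  unfolding psd2_def
proof (intro allI)
  fix u v :: real
  have "0 \<le> a" "0 \<le> c" using copos[of 1 0] copos[of 0 1] by simp_all
  show "0 \<le> a * u^2 + 2 * min b 0 * u * v + c * v^2"
  proof (cases "b < 0")
    case True
    have "0 \<le> b * (u * v - \<bar>u\<bar> * \<bar>v\<bar>)"
      using True by (intro mult_nonpos_nonpos) (auto simp: abs_mult[symmetric])
    moreover have "0 \<le> a * \<bar>u\<bar>^2 + 2 * b * \<bar>u\<bar> * \<bar>v\<bar> + c * \<bar>v\<bar>^2"
      by (rule copos) auto
    moreover have "a * u^2 + 2 * b * u * v + c * v^2
        = (a * \<bar>u\<bar>^2 + 2 * b * \<bar>u\<bar> * \<bar>v\<bar> + c * \<bar>v\<bar>^2) + 2 * (b * (u * v - \<bar>u\<bar> * \<bar>v\<bar>))"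
      by (simp add: algebra_simps)
    ultimately have "0 \<le> a * u^2 + 2 * b * u * v + c * v^2" by linarith
    with True show ?thesis by simp
  qed (use \<open>0 \<le> a\<close> \<open>0 \<le> c\<close> in simp)
qed

lemma psd2_shear:
  assumes "psd2 a b c"
  shows "psd2 (a - 2 * b + c) (b - c) c"
  unfolding psd2_def
proof (intro allI)
  fix u v :: real
  have "(a - 2 * b + c) * u^2 + 2 * (b - c) * u * v + c * v^2 = a * u^2 + 2 * b * u * (v - u) + c * (v - u)^2"
    by (simp add: algebra_simps power2_eq_square)
  then show "0 \<le> (a - 2 * b + c) * u^2 + 2 * (b - c) * u * v + c * v^2"
    using assms unfolding psd2_def by simp
qed

lemma psd2_mono:
  assumes "psd2 a b c" "a \<le> a'"
  shows "psd2 a' b c"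
  using assms unfolding psd2_def by (meson add_mono mult_right_mono order_trans zero_le_power2 order_refl)

lemma exists_psd2_pair_of_nonneg:
  fixes A B C e f :: real
  assumes nonneg: "\<And>m y V. 0 \<le> V \<Longrightarrow> 0 \<le> A * m^4 + B * m^2 * V + C * V^2 + V * (e * m * y + f * y^2)"
  shows "\<exists>t. psd2 (A - B + C + t) ((B - 2 * C - t) / 2) C \<and> psd2 t (e / 2) f"
proof -
  define K where "K = e^2 / (4 * f)"
  have "- (A + B + C) \<le> e * y + f * y^2" for y
    using nonneg[of 1 1 y] by simp
  then have f: "0 \<le> f" "f = 0 \<Longrightarrow> e = 0"
    by (rule bounded_below_quadratic_coeffs)+
  have "0 \<le> A * u^2 + 2 * ((B - K) / 2) * u * V + C * V^2" if "0 \<le> u" "0 \<le> V" for u V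
  proof -
    define m where "m = sqrt u"
    define y where "y = - (e * m) / (2 * f)"
    have vertex: "e * m * y + f * y^2 = - (K * m^2)"
      using quadratic_at_vertex[of f "e * m"] f(2) by (simp add: y_def K_def power_mult_distrib)
    have m2: "m^2 = u"
      using that(1) by (simp add: m_def)
    have m4: "m^4 = u^2"
      unfolding m2[symmetric] by (simp add: power4_eq_xxxx power2_eq_square)
    have "A * u^2 + 2 * ((B - K) / 2) * u * V + C * V^2 = A * m^4 + B * m^2 * V + C * V^2 + V * (e * m * y + f * y^2)"
      unfolding vertex m2 m4 by (simp add: field_simps)
    then show ?thesis
      using nonneg[OF that(2), of m y] by (simp only:)
  qed
  then have "psd2 A (min ((B - K) / 2) 0) C"
    by (rule psd2_of_copositive)
  \<comment> \<open>pass from the variables (m^2, V) to (m^2, m^2 + V), i.e. to (p1^2, p2)\<close>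
  then have "psd2 (A - 2 * min ((B - K) / 2) 0 + C) (min ((B - K) / 2) 0 - C) C"
    by (rule psd2_shear)
  moreover have "A - 2 * min ((B - K) / 2) 0 + C = A - B + C + max B K"
    "min ((B - K) / 2) 0 - C = (B - 2 * C - max B K) / 2"
    by (simp_all add: min_def max_def field_simps)
  ultimately have "psd2 (A - B + C + max B K) ((B - 2 * C - max B K) / 2) C"
    by (simp only:)
  moreover have "psd2 (max B K) (e / 2) f"
    using psd2_vertex[of f e] f unfolding K_def[symmetric] by (auto intro: psd2_mono)
  ultimately show ?thesis by blast
qed

section \<open>Two-point distributions\<close>

definition two_point_moment :: "real \<Rightarrow> real \<Rightarrow> real \<Rightarrow> nat \<Rightarrow> real" where
  "two_point_moment p a b i = p * a ^ i + (1 - p) * b ^ i"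

definition moment_form :: "real \<Rightarrow> real \<Rightarrow> real \<Rightarrow> real \<Rightarrow> real \<Rightarrow> (nat \<Rightarrow> real) \<Rightarrow> real" where
  "moment_form c4 c31 c22 c211 c1111 \<mu> =
     c4 * \<mu> 4 + c31 * (\<mu> 3 * \<mu> 1) + c22 * (\<mu> 2 * \<mu> 2) + c211 * (\<mu> 2 * \<mu> 1 * \<mu> 1)
     + c1111 * (\<mu> 1 * \<mu> 1 * \<mu> 1 * \<mu> 1)"

lemma mseq_eq_moment_form:
  "mseq c4 c31 c22 c211 c1111 n x = moment_form c4 c31 c22 c211 c1111 (\<lambda>i. psum n i x)"
  unfolding mseq_def moment_form_def p_4_def p_31_def p_22_def p_211_def p_1111_def ..

lemma psum_two_valued:
  assumes "k \<le> n" "0 < n"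
  shows "psum n i (\<lambda>j. if j < k then a else b) = two_point_moment (real k / real n) a b i"
proof -
  have split: "{..<n} = {..<k} \<union> {k..<n}"
    using assms(1) by auto
  have "(\<Sum>j<n. (if j < k then a else b) ^ i)
      = (\<Sum>j<k. (if j < k then a else b) ^ i) + (\<Sum>j\<in>{k..<n}. (if j < k then a else b) ^ i)"
    unfolding split by (rule sum.union_disjoint) auto
  also have "\<dots> = real k * a ^ i + real (n - k) * b ^ i"
    by simp
  finally have "(\<Sum>j<n. (if j < k then a else b) ^ i) = real k * a ^ i + real (n - k) * b ^ i" .
  then show ?thesis
    using assms unfolding psum_def two_point_moment_def by (simp add: of_nat_diff field_simps)
qed

lemma tendsto_floor_mult_div: "(\<lambda>n. of_int \<lfloor>p * real n\<rfloor> / real n) \<longlonglongrightarrow> p"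
proof (rule tendsto_sandwich[where f = "\<lambda>n. p - 1 / real n" and h = "\<lambda>n. p"])
  have "p * real n - 1 \<le> of_int \<lfloor>p * real n\<rfloor>" "of_int \<lfloor>p * real n\<rfloor> \<le> p * real n" for n
    by linarith+
  then show "\<forall>\<^sub>F n in sequentially. p - 1 / real n \<le> of_int \<lfloor>p * real n\<rfloor> / real n"
    "\<forall>\<^sub>F n in sequentially. of_int \<lfloor>p * real n\<rfloor> / real n \<le> p"
    by (auto intro!: eventually_sequentiallyI[of 1] simp: field_simps)
  show "(\<lambda>n. p - 1 / real n) \<longlonglongrightarrow> p"
    using tendsto_diff[OF tendsto_const lim_const_over_n[of 1]] by simp
qed simp

lemma nonneg_of_nonneg_at_fractions:
  fixes h :: "real \<Rightarrow> real"
  assumes frac: "\<And>n k. N \<le> n \<Longrightarrow> k \<le> n \<Longrightarrow> 0 \<le> h (real k / real n)"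
    and "isCont h p" "0 \<le> p" "p \<le> 1"
  shows "0 \<le> h p"
proof -
  define k where "k n = nat \<lfloor>p * real n\<rfloor>" for n
  have "(\<lambda>n. real (k n) / real n) = (\<lambda>n. of_int \<lfloor>p * real n\<rfloor> / real n)"
    using \<open>0 \<le> p\<close> by (simp add: k_def)
  then have "(\<lambda>n. real (k n) / real n) \<longlonglongrightarrow> p"
    using tendsto_floor_mult_div by simp
  then have lim: "(\<lambda>n. h (real (k n) / real n)) \<longlonglongrightarrow> h p"
    by (rule isCont_tendsto_compose[OF \<open>isCont h p\<close>])
  have "k n \<le> n" for n
  proof -
    have "p * real n \<le> real n"
      using \<open>0 \<le> p\<close> \<open>p \<le> 1\<close> by (simp add: mult_left_le_one_le)
    then have "\<lfloor>p * real n\<rfloor> \<le> \<lfloor>real n\<rfloor>"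
      by (rule floor_mono)
    then show ?thesis
      unfolding k_def by simp
  qed
  then have "\<forall>n\<ge>N. 0 \<le> h (real (k n) / real n)"
    using frac by simp
  then show ?thesis
    using LIMSEQ_le_const[OF lim] by blast
qed

lemma is_sos_nonneg: "is_sos n f \<Longrightarrow> 0 \<le> f x"
  unfolding is_sos_def by (auto intro!: sum_list_nonneg)

lemma in_S4_imp_two_point_nonneg:
  assumes "in_S4 (mseq c4 c31 c22 c211 c1111)" "0 \<le> p" "p \<le> 1"
  shows "0 \<le> moment_form c4 c31 c22 c211 c1111 (two_point_moment p a b)"
proof (rule nonneg_of_nonneg_at_fractions[where N = 4 and h = "\<lambda>p. moment_form c4 c31 c22 c211 c1111 (two_point_moment p a b)"])
  fix n k :: nat
  assume "4 \<le> n" "k \<le> n"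
  have "is_sos n (mseq c4 c31 c22 c211 c1111 n)"
    using assms(1) \<open>4 \<le> n\<close> unfolding in_S4_def by simp
  then have "0 \<le> mseq c4 c31 c22 c211 c1111 n (\<lambda>j. if j < k then a else b)"
    by (rule is_sos_nonneg)
  with \<open>4 \<le> n\<close> \<open>k \<le> n\<close> show "0 \<le> moment_form c4 c31 c22 c211 c1111 (two_point_moment (real k / real n) a b)"
    unfolding mseq_eq_moment_form by (simp add: psum_two_valued)
next
  show "isCont (\<lambda>p. moment_form c4 c31 c22 c211 c1111 (two_point_moment p a b)) p"
    unfolding moment_form_def two_point_moment_def by (intro continuous_intros)
qed (use assms in auto)

text \<open>The atoms m + (1 - p) d and m - p d give mean m, variance V = p (1 - p) d^2 and third
  central moment V (1 - 2 p) d.\<close>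

lemma moment_form_two_point_mean_spread:
  "moment_form c4 c31 c22 c211 c1111 (two_point_moment p (m + (1 - p) * d) (m - p * d))
    = (c1111 + c211 + c31 + c22 + c4) * m^4 + (c211 + c31 + 2 * (c22 + c4)) * m^2 * (p * (1 - p) * d^2)
      + (c22 + c4) * (p * (1 - p) * d^2)^2
      + (p * (1 - p) * d^2) * (c31 * m * ((1 - 2 * p) * d + 2 * m) + c4 * ((1 - 2 * p) * d + 2 * m)^2)"
  unfolding moment_form_def two_point_moment_def by algebra

lemma two_point_parameters_exist:
  fixes V s :: real
  assumes "0 \<le> V"
  obtains p d where "0 \<le> p" "p \<le> 1" "p * (1 - p) * d^2 = V" "(1 - 2 * p) * d = s"
proof (cases "4 * V + s^2 = 0")
  case True
  then have "V = 0" "s = 0"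
    using \<open>0 \<le> V\<close> by (auto simp: add_nonneg_eq_0_iff)
  then show ?thesis
    using that[of 0 0] by simp
next
  case False
  define d where "d = sqrt (4 * V + s^2)"
  have pos: "0 < 4 * V + s^2"
    using False \<open>0 \<le> V\<close> zero_le_power2[of s] by linarith
  then have "0 < d" "d^2 = 4 * V + s^2"
    by (simp_all add: d_def)
  moreover have "\<bar>s\<bar> \<le> d"
    unfolding d_def using \<open>0 \<le> V\<close> by (simp add: real_le_rsqrt)
  ultimately show ?thesis
    using pos by (intro that[of "(1 - s / d) / 2" d]) (auto simp: abs_le_iff field_simps power2_eq_square)
qed

lemma in_S4_imp_reduced_form_nonneg:
  assumes "in_S4 (mseq c4 c31 c22 c211 c1111)" "0 \<le> V"
  shows "0 \<le> (c1111 + c211 + c31 + c22 + c4) * m^4 + (c211 + c31 + 2 * (c22 + c4)) * m^2 * V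
    + (c22 + c4) * V^2 + V * (c31 * m * y + c4 * y^2)"
proof -
  obtain p d where "0 \<le> p" "p \<le> 1" and V: "p * (1 - p) * d^2 = V" and y: "(1 - 2 * p) * d + 2 * m = y"
    using two_point_parameters_exist[OF assms(2), of "y - 2 * m"] by (metis diff_add_cancel)
  show ?thesis
    using in_S4_imp_two_point_nonneg[OF assms(1) \<open>0 \<le> p\<close> \<open>p \<le> 1\<close>, of "m + (1 - p) * d" "m - p * d"]
    unfolding moment_form_two_point_mean_spread V y .
qed

lemma in_S4_imp_psd2_pair:
  assumes "in_S4 (mseq c4 c31 c22 c211 c1111)"
  obtains t where "psd2 (c1111 + t) ((c211 + c31 - t) / 2) (c22 + c4)" "psd2 t (c31 / 2) c4"
  using exists_psd2_pair_of_nonneg[OF in_S4_imp_reduced_form_nonneg[OF assms]] that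
  by (auto simp: algebra_simps)

theorem corollary6p2:
  fixes c4 c31 c22 c211 c1111 :: real
  shows "in_S4 (mseq c4 c31 c22 c211 c1111) \<longleftrightarrow>
    (\<exists>a11 a12 a22 b11 b12 b22 :: real.
       psd2 a11 a12 a22 \<and> psd2 b11 b12 b22 \<and>
       (\<forall>n\<ge>4. \<forall>x. mseq c4 c31 c22 c211 c1111 n x =
            a11 * p_1111 n x + 2 * a12 * p_211 n x + a22 * p_22 n x
          + b11 * (p_211 n x - p_1111 n x) + 2 * b12 * (p_31 n x - p_211 n x)
          + b22 * (p_4 n x - p_22 n x)))"
  (is "?S4 \<longleftrightarrow> ?decomposable")
proof
  assume ?S4
  then obtain t where "psd2 (c1111 + t) ((c211 + c31 - t) / 2) (c22 + c4)" "psd2 t (c31 / 2) c4"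
    by (rule in_S4_imp_psd2_pair)
  moreover have "mseq c4 c31 c22 c211 c1111 n x =
      (c1111 + t) * p_1111 n x + 2 * ((c211 + c31 - t) / 2) * p_211 n x + (c22 + c4) * p_22 n x
    + t * (p_211 n x - p_1111 n x) + 2 * (c31 / 2) * (p_31 n x - p_211 n x)
    + c4 * (p_4 n x - p_22 n x)" for n x
    unfolding mseq_def by (simp add: field_simps)
  ultimately show ?decomposable
    by blast
next
  assume ?decomposable
  then obtain a11 a12 a22 b11 b12 b22 where psd: "psd2 a11 a12 a22" "psd2 b11 b12 b22"
    and decomposition: "\<forall>n\<ge>4. \<forall>x. mseq c4 c31 c22 c211 c1111 n x =
            a11 * p_1111 n x + 2 * a12 * p_211 n x + a22 * p_22 n x
          + b11 * (p_211 n x - p_1111 n x) + 2 * b12 * (p_31 n x - p_211 n x)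
          + b22 * (p_4 n x - p_22 n x)"
    by blast
  show ?S4
    unfolding in_S4_def
    by (auto intro!: is_sos_psd2_combination[OF psd] simp: decomposition)
qed

end
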